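(* Let $t\ge 3$ and let $T\in\{1,-1\}^t$. Then $\mathfrak{q}(\mathrm{ro}(T))=\mathfrak{q}(T)$. Moreover, with $T^-:=\{e\in\{1,\ldots,t\}: T(e)=-1\}$: (i) if $|T^-\cap\{1,t\}|=1$, then $\boldsymbol{x}(\mathrm{ro}(T))=\boldsymbol{x}(T)\,\overline{\mathbf{U}}(t)\,\overline{\mathbf{T}}(t)$; (ii) if $|T^-\cap\{1,t\}|=2$, then $\boldsymbol{x}(\mathrm{ro}(T))=\boldsymbol{\sigma}(1)+\boldsymbol{x}(T)\,\overline{\mathbf{U}}(t)\,\overline{\mathbf{T}}(t)$; (iii) if $|T^-\cap\{1,t\}|=0$, then $\boldsymbol{x}(\mathrm{ro}(T))=-\boldsymbol{\sigma}(1)+\boldsymbol{x}(T)\,\overline{\mathbf{U}}(t)\,\overline{\mathbf{T}}(t)$.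
   Context: Vectors are row vectors in $\mathbb{R}^t$; $\boldsymbol{\sigma}(e)$ is the $e$-th standard unit vector, $\mathrm{T}^{(+)}=(1,\ldots,1)$. For $S\subseteq\{1,\ldots,t\}$, ${}_{-S}\mathrm{T}^{(+)}$ denotes the vector with entries $-1$ on $S$ and $1$ elsewhere. Define $R^0:=\mathrm{T}^{(+)}$ and $R^s:={}_{-\{1,\ldots,s\}}\mathrm{T}^{(+)}$ for $1\le s\le t-1$. These form a basis of $\mathbb{R}^t$; for $T\in\{1,-1\}^t$, $\boldsymbol{x}(T)$ denotes the unique vector (it lies in $\{-1,0,1\}^t$) with $T=\sum_{i=1}^t x_iR^{i-1}$, and $\mathfrak{q}(T)$ is the number of nonzero entries of $\boldsymbol{x}(T)$. $\overline{\mathbf{U}}(t)$ is the $t\times t$ backward identity matrix ($(i,j)$ entry $\delta_{i+j,t+1}$), $\overline{\mathbf{T}}(t)$ is the $t\times t$ forward shift matrix ($(i,j)$ entry $\delta_{j-i,1}$), and $\mathrm{ro}(T):=-T\,\overline{\mathbf{U}}(t)$. *)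

theory Defs
  imports Complex_Main
begin

text \<open>Vectors in R^t are represented as functions nat => real, indexed by 1..t,
  and equal to 0 outside {1..t}. Matrices are functions nat => nat => real,
  indexed by 1..t on both sides.\<close>

definition vecs :: "nat \<Rightarrow> (nat \<Rightarrow> real) set" where
  "vecs t = {v. \<forall>i. i \<notin> {1..t} \<longrightarrow> v i = 0}"

definition signvecs :: "nat \<Rightarrow> (nat \<Rightarrow> real) set" where
  "signvecs t = {T. T \<in> vecs t \<and> (\<forall>e\<in>{1..t}. T e = 1 \<or> T e = -1)}"

definition stdvec :: "nat \<Rightarrow> nat \<Rightarrow> real" where
  "stdvec e = (\<lambda>i. if i = e then 1 else 0)"

definition Rbasis :: "nat \<Rightarrow> nat \<Rightarrow> nat \<Rightarrow> real" where
  "Rbasis t s = (\<lambda>e. if e \<in> {1..t} then (if e \<le> s then -1 else 1) else 0)"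

definition xvec :: "nat \<Rightarrow> (nat \<Rightarrow> real) \<Rightarrow> nat \<Rightarrow> real" where
  "xvec t T = (THE x. x \<in> vecs t \<and>
      T = (\<lambda>e. \<Sum>i=1..t. x i * Rbasis t (i - 1) e))"

definition qnum :: "nat \<Rightarrow> (nat \<Rightarrow> real) \<Rightarrow> nat" where
  "qnum t T = card {i \<in> {1..t}. xvec t T i \<noteq> 0}"

definition Ubar :: "nat \<Rightarrow> nat \<Rightarrow> nat \<Rightarrow> real" where
  "Ubar t = (\<lambda>i j. if i + j = t + 1 then 1 else 0)"

definition Tbar :: "nat \<Rightarrow> nat \<Rightarrow> nat \<Rightarrow> real" where
  "Tbar t = (\<lambda>i j. if j = i + 1 then 1 else 0)"

definition vecmat :: "nat \<Rightarrow> (nat \<Rightarrow> real) \<Rightarrow> (nat \<Rightarrow> nat \<Rightarrow> real) \<Rightarrow> nat \<Rightarrow> real" where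
  "vecmat t v M = (\<lambda>j. if j \<in> {1..t} then (\<Sum>i=1..t. v i * M i j) else 0)"

definition ro :: "nat \<Rightarrow> (nat \<Rightarrow> real) \<Rightarrow> nat \<Rightarrow> real" where
  "ro t T = (\<lambda>j. - vecmat t T (Ubar t) j)"

definition negset :: "nat \<Rightarrow> (nat \<Rightarrow> real) \<Rightarrow> nat set" where
  "negset t T = {e \<in> {1..t}. T e = -1}"

end

theory Submission
  imports Defs
begin

text \<open>Expanding \<open>T = \<Sum>i x\<^sub>i R\<^sup>i\<^sup>-\<^sup>1\<close> gives \<open>T\<^sub>e = 2(x\<^sub>1 + \<dots> + x\<^sub>e) - (x\<^sub>1 + \<dots> + x\<^sub>t)\<close>, so the
  coordinates are \<open>x\<^sub>1 = (T\<^sub>1 + T\<^sub>t)/2\<close> and the half increments \<open>x\<^sub>j = (T\<^sub>j - T\<^sub>j\<^sub>-\<^sub>1)/2\<close>.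
  Since \<open>ro\<close> reverses and negates \<open>T\<close>, it keeps \<open>T\<^sub>1 + T\<^sub>t\<close> up to sign and reverses the order
  of the increments: \<open>x(ro T) = -x\<^sub>1 \<sigma>(1) + x(T) Ubar Tbar\<close>, a signed permutation of \<open>x(T)\<close>.
  Finally \<open>-x\<^sub>1\<close> is \<open>-1\<close>, \<open>0\<close> or \<open>1\<close> according as \<open>T\<close> has no, one or two negative ends.\<close>

definition half_increments :: "nat \<Rightarrow> (nat \<Rightarrow> real) \<Rightarrow> nat \<Rightarrow> real" where
  "half_increments t T = (\<lambda>j. if j = 1 then (T 1 + T t) / 2
     else if j \<in> {2..t} then (T j - T (j - 1)) / 2 else 0)"

lemma sum_split_at:
  fixes f :: "nat \<Rightarrow> real"
  shows "e \<le> t \<Longrightarrow> (\<Sum>i=1..t. f i) = (\<Sum>i=1..e. f i) + (\<Sum>i=e+1..t. f i)"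
  using sum.ub_add_nat[of 1 e f "t - e"] by simp

lemma sum_Rbasis_eq:
  assumes "e \<in> {1..t}"
  shows "(\<Sum>i=1..t. x i * Rbasis t (i - 1) e) = 2 * (\<Sum>i=1..e. x i) - (\<Sum>i=1..t. x i)"
proof -
  have "(\<Sum>i=1..t. x i * Rbasis t (i - 1) e)
      = (\<Sum>i=1..e. x i * Rbasis t (i - 1) e) + (\<Sum>i=e+1..t. x i * Rbasis t (i - 1) e)"
    using assms by (intro sum_split_at) auto
  also have "(\<Sum>i=1..e. x i * Rbasis t (i - 1) e) = (\<Sum>i=1..e. x i)"
    using assms by (intro sum.cong) (auto simp: Rbasis_def)
  also have "(\<Sum>i=e+1..t. x i * Rbasis t (i - 1) e) = - (\<Sum>i=e+1..t. x i)"
    using assms by (auto simp: Rbasis_def sum_negf[symmetric] intro!: sum.cong)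
  finally show ?thesis
    using sum_split_at[of e t x] assms by simp
qed

lemma sum_half_increments:
  assumes "e \<in> {1..t}"
  shows "(\<Sum>i=1..e. half_increments t T i) = (T t + T e) / 2"
  using assms
proof (induction e)
  case (Suc e)
  show ?case
  proof (cases "e = 0")
    case False
    then have "(\<Sum>i=1..Suc e. half_increments t T i) = (T t + T e) / 2 + half_increments t T (Suc e)"
      using Suc by (simp add: sum.cl_ivl_Suc)
    then show ?thesis
      using Suc False by (simp add: half_increments_def field_simps)
  qed (simp add: half_increments_def)
qed simp

lemma Rbasis_combination_half_increments:
  assumes "T \<in> vecs t"
  shows "(\<lambda>e. \<Sum>i=1..t. half_increments t T i * Rbasis t (i - 1) e) = T"
proof
  fix e
  show "(\<Sum>i=1..t. half_increments t T i * Rbasis t (i - 1) e) = T e"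
  proof (cases "e \<in> {1..t}")
    case True
    moreover from True have "t \<in> {1..t}" by auto
    ultimately show ?thesis
      unfolding sum_Rbasis_eq[OF True] sum_half_increments[OF True] sum_half_increments[OF \<open>t \<in> {1..t}\<close>]
      by (simp add: field_simps)
  next
    case False
    then show ?thesis
      using assms by (auto simp: vecs_def Rbasis_def)
  qed
qed

lemma half_increments_Rbasis_combination:
  assumes "x \<in> vecs t" "t \<ge> 1"
  shows "half_increments t (\<lambda>e. \<Sum>i=1..t. x i * Rbasis t (i - 1) e) = x"
proof
  fix j
  define P where "P e = (\<Sum>i=1..e. x i)" for e
  have comb: "(\<Sum>i=1..t. x i * Rbasis t (i - 1) e) = 2 * P e - P t" if "e \<in> {1..t}" for e
    using sum_Rbasis_eq[OF that] by (simp add: P_def)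
  consider "j = 1" | "j \<in> {2..t}" | "j \<notin> {1..t}"
    by fastforce
  then show "half_increments t (\<lambda>e. \<Sum>i=1..t. x i * Rbasis t (i - 1) e) j = x j"
  proof cases
    case 1
    then show ?thesis
      using assms(2) comb[of 1] comb[of t] by (simp add: half_increments_def P_def del: One_nat_def)
  next
    case 2
    then have "P j = P (j - 1) + x j"
      unfolding P_def by (cases j) (auto simp: sum.cl_ivl_Suc)
    moreover from 2 have "j - 1 \<in> {1..t}" by auto
    ultimately show ?thesis
      using 2 comb[of j] comb[of "j - 1"] by (simp add: half_increments_def)
  next
    case 3
    then show ?thesis
      using assms(1) by (auto simp: half_increments_def vecs_def)
  qed
qed

lemma xvec_eq_half_increments:
  assumes "T \<in> vecs t" "t \<ge> 1"
  shows "xvec t T = half_increments t T"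
  unfolding xvec_def
proof (rule the_equality)
  show "half_increments t T \<in> vecs t \<and>
      T = (\<lambda>e. \<Sum>i=1..t. half_increments t T i * Rbasis t (i - 1) e)"
    using Rbasis_combination_half_increments[OF assms(1)]
    by (auto simp: vecs_def half_increments_def)
next
  fix x
  assume "x \<in> vecs t \<and> T = (\<lambda>e. \<Sum>i=1..t. x i * Rbasis t (i - 1) e)"
  then show "x = half_increments t T"
    using half_increments_Rbasis_combination[OF _ assms(2)] by metis
qed

lemma vecmat_Ubar:
  assumes "j \<in> {1..t}"
  shows "vecmat t v (Ubar t) j = v (t + 1 - j)"
proof -
  have "vecmat t v (Ubar t) j = (\<Sum>i\<in>{1..t}. v i * Ubar t i j)"
    using assms by (simp add: vecmat_def)
  also have "\<dots> = (\<Sum>i\<in>{1..t}. if i = t + 1 - j then v i else 0)"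
    using assms by (intro sum.cong) (auto simp: Ubar_def)
  also have "\<dots> = v (t + 1 - j)"
    using assms by (subst sum.delta) auto
  finally show ?thesis .
qed

lemma vecmat_Tbar: "vecmat t w (Tbar t) j = (if j \<in> {2..t} then w (j - 1) else 0)"
proof (cases "j \<in> {2..t}")
  case True
  then have "vecmat t w (Tbar t) j = (\<Sum>i\<in>{1..t}. w i * Tbar t i j)"
    by (simp add: vecmat_def)
  also have "\<dots> = (\<Sum>i\<in>{1..t}. if i = j - 1 then w i else 0)"
    using True by (intro sum.cong) (auto simp: Tbar_def)
  also have "\<dots> = w (j - 1)"
    using True by (subst sum.delta) auto
  finally show ?thesis
    using True by simp
qed (auto simp: vecmat_def Tbar_def intro!: sum.neutral)

lemma vecmat_Ubar_Tbar:
  "vecmat t (vecmat t v (Ubar t)) (Tbar t) j = (if j \<in> {2..t} then v (t + 2 - j) else 0)"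
proof -
  have "j - 1 \<in> {1..t}" "t + 1 - (j - 1) = t + 2 - j" if "j \<in> {2..t}"
    using that by auto
  then show ?thesis
    by (simp add: vecmat_Tbar vecmat_Ubar)
qed

lemma ro_in_vecs: "ro t T \<in> vecs t"
  by (auto simp: ro_def vecs_def vecmat_def)

lemma ro_apply: "j \<in> {1..t} \<Longrightarrow> ro t T j = - T (t + 1 - j)"
  by (simp add: ro_def vecmat_Ubar)

lemma xvec_ro:
  assumes "T \<in> vecs t" "t \<ge> 1"
  shows "xvec t (ro t T) j =
    (if j = 1 then - xvec t T 1 else if j \<in> {2..t} then xvec t T (t + 2 - j) else 0)"
proof -
  have "t \<in> {1..t}" "1 \<in> {1..t}"
    using assms(2) by auto
  moreover have "j - 1 \<in> {1..t}" "t + 2 - j \<noteq> 1" "t + 2 - j \<in> {2..t}" "t + 1 - (j - 1) = t + 2 - j"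
    "t + 2 - j - 1 = t + 1 - j" if "j \<in> {2..t}"
    using that by auto
  ultimately show ?thesis
    unfolding xvec_eq_half_increments[OF ro_in_vecs assms(2)] xvec_eq_half_increments[OF assms]
    by (auto simp: half_increments_def ro_apply field_simps)
qed

lemma xvec_ro_eq_reflection:
  assumes "T \<in> vecs t" "t \<ge> 1"
  shows "xvec t (ro t T) =
    (\<lambda>i. - xvec t T 1 * stdvec 1 i + vecmat t (vecmat t (xvec t T) (Ubar t)) (Tbar t) i)"
  by (auto simp: xvec_ro[OF assms] vecmat_Ubar_Tbar stdvec_def)

lemma card_nonzero_involution:
  fixes x y :: "'a \<Rightarrow> 'b::zero"
  assumes "\<And>i. i \<in> A \<Longrightarrow> h i \<in> A" "\<And>i. i \<in> A \<Longrightarrow> h (h i) = i"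
    and "\<And>i. i \<in> A \<Longrightarrow> y i \<noteq> 0 \<longleftrightarrow> x (h i) \<noteq> 0"
  shows "card {i \<in> A. y i \<noteq> 0} = card {i \<in> A. x i \<noteq> 0}"
proof (rule bij_betw_same_card)
  show "bij_betw h {i \<in> A. y i \<noteq> 0} {i \<in> A. x i \<noteq> 0}"
    by (rule bij_betw_byWitness[where f' = h]) (use assms in auto)
qed

lemma qnum_ro:
  assumes "T \<in> vecs t" "t \<ge> 1"
  shows "qnum t (ro t T) = qnum t T"
  unfolding qnum_def
proof (rule card_nonzero_involution)
  let ?h = "\<lambda>i. if i = 1 then 1 else t + 2 - i"
  fix i :: nat
  assume "i \<in> {1..t}"
  then show "?h i \<in> {1..t}" "?h (?h i) = i"
    and "xvec t (ro t T) i \<noteq> 0 \<longleftrightarrow> xvec t T (?h i) \<noteq> 0"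
    using assms(2) by (auto simp: xvec_ro[OF assms])
qed

theorem corollary2p3:
  fixes t :: nat and T :: "nat \<Rightarrow> real"
  assumes "t \<ge> 3" and "T \<in> signvecs t"
  shows "qnum t (ro t T) = qnum t T
    \<and> (card (negset t T \<inter> {1, t}) = 1 \<longrightarrow>
         xvec t (ro t T) = vecmat t (vecmat t (xvec t T) (Ubar t)) (Tbar t))
    \<and> (card (negset t T \<inter> {1, t}) = 2 \<longrightarrow>
         xvec t (ro t T) = (\<lambda>i. stdvec 1 i + vecmat t (vecmat t (xvec t T) (Ubar t)) (Tbar t) i))
    \<and> (card (negset t T \<inter> {1, t}) = 0 \<longrightarrow>
         xvec t (ro t T) = (\<lambda>i. - stdvec 1 i + vecmat t (vecmat t (xvec t T) (Ubar t)) (Tbar t) i))"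
proof -
  have T: "T \<in> vecs t" and t: "t \<ge> 1" "1 \<noteq> t"
    using assms by (auto simp: signvecs_def)
  have ends: "T 1 = 1 \<or> T 1 = -1" "T t = 1 \<or> T t = -1"
    using assms by (auto simp: signvecs_def)
  have x1: "xvec t T 1 = (T 1 + T t) / 2"
    by (simp add: xvec_eq_half_increments[OF T t(1)] half_increments_def)
  have "negset t T \<inter> {1, t} = (if T 1 = -1 then {1} else {}) \<union> (if T t = -1 then {t} else {})"
    using t by (auto simp: negset_def)
  then show ?thesis
    unfolding qnum_ro[OF T t(1)] xvec_ro_eq_reflection[OF T t(1)] x1
    using ends t(2) by auto
qed

end
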